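(* Let $G=(V,E)$ be a finite graph (parallel edges and loops allowed), $e\neq f$ edges of $G$, and $E^{ef}=E\setminus\{e,f\}$. For each paracel $\gamma\subseteq E^{ef}$ there is exactly one choice of a subset $\beta\subseteq E^{ef}$ disjoint from $\gamma$ and a monomial $\mathbf{m}\in B_{\beta,\gamma}$ such that $\mathbf{x}^{\beta}\mathbf{x}^{\gamma}\mathbf{m}=\prod_{g\in E^{ef}}x_g$.
   Context: For $F\subseteq E$, $\mathbf{x}^F=\prod_{g\in F}x_g$ and $k(F)$ is the number of connected components of the spanning subgraph $(V,F)$. A subset $F\subseteq E^{ef}$ is a paracel if $e$ and $f$ both join the same two distinct connected components of $(V,F)$; equivalently $(V,F+e)$ and $(V,F+f)$ have the same connected components and $k(F+e)=k(F+f)=k(F)-1$. For a paracel $F$, an edge of $E^{ef}\setminus F$ is a smoot for $F$ if it joins the same two components of $(V,F)$ as $e$ and $f$. For disjoint $\beta,\gamma\subseteq E^{ef}$, a subset $\alpha\subseteq E^{ef}$ is compatible with $\beta,\gamma$ if $\alpha$ is disjoint from $\beta$ and $\gamma$, $\gamma\cup\alpha$ is a paracel, and every edge of $\beta$ is a smoot for $\gamma\cup\alpha$; $A_{\beta,\gamma}$ is the set of compatible $\alpha$. Elements $\alpha,\alpha'\in A_{\beta,\gamma}$ (possibly equal) are twins if $\alpha\cap\alpha'\in A_{\beta,\gamma}$, and $B_{\beta,\gamma}$ is the set of distinct monomials $\mathbf{x}^{\alpha}\mathbf{x}^{\alpha'}$ with $\alpha,\alpha'$ twins in $A_{\beta,\gamma}$.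 *)

theory Defs
  imports Main "HOL-Library.Multiset"
begin

text \<open>A finite multigraph (parallel edges and loops allowed) is given by a vertex set V,
an edge set E and an endpoint map ends assigning to every edge its (unordered) pair of
endpoints, encoded as an ordered pair; a loop has ends g = (v, v).
Monomials in the commuting variables x_g are encoded as multisets of edges.\<close>

definition graph :: "'v set \<Rightarrow> 'e set \<Rightarrow> ('e \<Rightarrow> 'v \<times> 'v) \<Rightarrow> bool" where
  "graph V E ends \<longleftrightarrow> finite V \<and> finite E \<and>
     (\<forall>g\<in>E. fst (ends g) \<in> V \<and> snd (ends g) \<in> V)"

definition adj :: "('e \<Rightarrow> 'v \<times> 'v) \<Rightarrow> 'e set \<Rightarrow> ('v \<times> 'v) set" where
  "adj ends F = {(a, b). \<exists>g\<in>F. ends g = (a, b) \<or> ends g = (b, a)}"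

definition comp :: "'v set \<Rightarrow> ('e \<Rightarrow> 'v \<times> 'v) \<Rightarrow> 'e set \<Rightarrow> 'v \<Rightarrow> 'v set" where
  "comp V ends F u = {w \<in> V. (u, w) \<in> (adj ends F)\<^sup>*}"

definition joined :: "'v set \<Rightarrow> ('e \<Rightarrow> 'v \<times> 'v) \<Rightarrow> 'e set \<Rightarrow> 'e \<Rightarrow> 'v set set" where
  "joined V ends F g = {comp V ends F (fst (ends g)), comp V ends F (snd (ends g))}"

definition Eef :: "'e set \<Rightarrow> 'e \<Rightarrow> 'e \<Rightarrow> 'e set" where
  "Eef E e f = E - {e, f}"

definition paracel :: "'v set \<Rightarrow> 'e set \<Rightarrow> ('e \<Rightarrow> 'v \<times> 'v) \<Rightarrow> 'e \<Rightarrow> 'e \<Rightarrow> 'e set \<Rightarrow> bool" where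
  "paracel V E ends e f F \<longleftrightarrow> F \<subseteq> Eef E e f \<and>
     comp V ends F (fst (ends e)) \<noteq> comp V ends F (snd (ends e)) \<and>
     joined V ends F f = joined V ends F e"

definition smoot :: "'v set \<Rightarrow> 'e set \<Rightarrow> ('e \<Rightarrow> 'v \<times> 'v) \<Rightarrow> 'e \<Rightarrow> 'e \<Rightarrow> 'e set \<Rightarrow> 'e \<Rightarrow> bool" where
  "smoot V E ends e f F g \<longleftrightarrow> g \<in> Eef E e f - F \<and> joined V ends F g = joined V ends F e"

definition compatible ::
  "'v set \<Rightarrow> 'e set \<Rightarrow> ('e \<Rightarrow> 'v \<times> 'v) \<Rightarrow> 'e \<Rightarrow> 'e \<Rightarrow> 'e set \<Rightarrow> 'e set \<Rightarrow> 'e set \<Rightarrow> bool" where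
  "compatible V E ends e f \<beta> \<gamma> \<alpha> \<longleftrightarrow> \<alpha> \<subseteq> Eef E e f \<and> \<alpha> \<inter> \<beta> = {} \<and> \<alpha> \<inter> \<gamma> = {} \<and>
     paracel V E ends e f (\<gamma> \<union> \<alpha>) \<and> (\<forall>g\<in>\<beta>. smoot V E ends e f (\<gamma> \<union> \<alpha>) g)"

definition Aset :: "'v set \<Rightarrow> 'e set \<Rightarrow> ('e \<Rightarrow> 'v \<times> 'v) \<Rightarrow> 'e \<Rightarrow> 'e \<Rightarrow> 'e set \<Rightarrow> 'e set \<Rightarrow> 'e set set" where
  "Aset V E ends e f \<beta> \<gamma> = {\<alpha>. compatible V E ends e f \<beta> \<gamma> \<alpha>}"

definition xmon :: "'e set \<Rightarrow> 'e multiset" where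
  "xmon F = mset_set F"

definition twins :: "'v set \<Rightarrow> 'e set \<Rightarrow> ('e \<Rightarrow> 'v \<times> 'v) \<Rightarrow> 'e \<Rightarrow> 'e \<Rightarrow> 'e set \<Rightarrow> 'e set \<Rightarrow> 'e set \<Rightarrow> 'e set \<Rightarrow> bool" where
  "twins V E ends e f \<beta> \<gamma> \<alpha> \<alpha>' \<longleftrightarrow> \<alpha> \<in> Aset V E ends e f \<beta> \<gamma> \<and> \<alpha>' \<in> Aset V E ends e f \<beta> \<gamma> \<and>
     \<alpha> \<inter> \<alpha>' \<in> Aset V E ends e f \<beta> \<gamma>"

definition Bset :: "'v set \<Rightarrow> 'e set \<Rightarrow> ('e \<Rightarrow> 'v \<times> 'v) \<Rightarrow> 'e \<Rightarrow> 'e \<Rightarrow> 'e set \<Rightarrow> 'e set \<Rightarrow> 'e multiset set" where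
  "Bset V E ends e f \<beta> \<gamma> = {xmon \<alpha> + xmon \<alpha>' | \<alpha> \<alpha>'. twins V E ends e f \<beta> \<gamma> \<alpha> \<alpha>'}"

end

theory Submission
  imports Defs
begin

text \<open>Let \<open>C\<^sub>1\<close>, \<open>C\<^sub>2\<close> be the components of \<open>(V,\<gamma>)\<close> joined by \<open>e\<close>. A smoot of \<open>\<gamma>\<close> cannot
lie in any compatible \<open>\<alpha>\<close>, since it would merge the two components of \<open>(V,\<gamma> \<union> \<alpha>)\<close> joined
by \<open>e\<close>. If \<open>x\<^sup>\<beta> x\<^sup>\<gamma> x\<^sup>\<alpha> x\<^sup>\<alpha>'\<close> is the product of all variables of \<open>E\<^sup>e\<^sup>f\<close>, then
\<open>\<alpha> \<inter> \<alpha>' = {}\<close>, so compatibility of \<open>\<alpha> \<inter> \<alpha>'\<close> makes every edge of \<open>\<beta>\<close> a smoot of \<open>\<gamma>\<close>;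
and every smoot lies in none of \<open>\<gamma>, \<alpha>, \<alpha>'\<close>, hence in \<open>\<beta>\<close>. So \<open>\<beta>\<close> is the set of smoots
of \<open>\<gamma>\<close>, which determines the monomial. For existence, split the remaining edges into
those touching \<open>C\<^sub>2\<close> and the rest: no such edge touches both \<open>C\<^sub>1\<close> and \<open>C\<^sub>2\<close> (it would be a
smoot), so each part avoids one of the two components, adding it to \<open>\<gamma>\<close> keeps them apart,
and the two parts are twins with empty intersection.\<close>

lemma graph_ends_mem:
  "graph V E ends \<Longrightarrow> g \<in> E \<Longrightarrow> fst (ends g) \<in> V \<and> snd (ends g) \<in> V"
  by (simp add: graph_def)

lemma sym_rtrancl_adj: "sym ((adj ends F)\<^sup>*)"
  by (rule sym_rtrancl) (auto simp: sym_def adj_def)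

lemma rtrancl_adj_mono: "F \<subseteq> F' \<Longrightarrow> (adj ends F)\<^sup>* \<subseteq> (adj ends F')\<^sup>*"
  by (rule rtrancl_mono) (auto simp: adj_def)

lemma self_in_comp: "x \<in> V \<Longrightarrow> x \<in> comp V ends F x"
  unfolding comp_def by simp

lemma comp_eq_if_mem: "x \<in> comp V ends F y \<Longrightarrow> comp V ends F x = comp V ends F y"
  using sym_rtrancl_adj[of ends F] unfolding comp_def
  by (auto dest: symD intro: rtrancl_trans)

lemma comp_eq_mono:
  assumes "F \<subseteq> F'" "x \<in> V" "comp V ends F x = comp V ends F y"
  shows "comp V ends F' x = comp V ends F' y"
proof -
  have "(y, x) \<in> (adj ends F)\<^sup>*"
    using self_in_comp[OF assms(2)] assms(3) by (auto simp: comp_def)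
  then have "x \<in> comp V ends F' y"
    using rtrancl_adj_mono[OF assms(1)] assms(2) by (auto simp: comp_def)
  then show ?thesis by (rule comp_eq_if_mem)
qed

lemma joined_eq_mono:
  assumes "graph V E ends" "g \<in> E" "h \<in> E" "F \<subseteq> F'"
    and "joined V ends F g = joined V ends F h"
  shows "joined V ends F' g = joined V ends F' h"
proof -
  \<comment> \<open>each component of \<open>(V,F)\<close> lies inside one component of \<open>(V,F')\<close>\<close>
  define lift where "lift C = comp V ends F' (SOME x. x \<in> C)" for C
  have "comp V ends F' x = lift (comp V ends F x)" if "x \<in> V" for x
  proof -
    define y where "y = (SOME y. y \<in> comp V ends F x)"
    have "y \<in> comp V ends F x"
      unfolding y_def using self_in_comp[OF that] by (rule someI)
    then have "y \<in> V" "comp V ends F y = comp V ends F x"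
      by (simp add: comp_def, rule comp_eq_if_mem)
    then show ?thesis
      unfolding lift_def y_def[symmetric] by (simp add: comp_eq_mono[OF assms(4)])
  qed
  then have "joined V ends F' k = lift ` joined V ends F k" if "k \<in> E" for k
    using assms(1) that by (simp add: joined_def graph_def)
  then show ?thesis using assms(2,3,5) by simp
qed

lemma joined_singleton_if_mem:
  assumes "graph V E ends" "g \<in> F" "g \<in> E"
  shows "joined V ends F g = {comp V ends F (fst (ends g))}"
proof -
  have "(fst (ends g), snd (ends g)) \<in> adj ends F"
    using assms(2) by (auto simp: adj_def)
  then have "snd (ends g) \<in> comp V ends F (fst (ends g))"
    using assms(1,3) by (auto simp: comp_def graph_def)
  then show ?thesis
    unfolding joined_def by (simp add: comp_eq_if_mem)
qed

lemma joined_ne_if_mem_paracel: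
  assumes "graph V E ends" "paracel V E ends e f F" "g \<in> F" "g \<in> E"
  shows "joined V ends F g \<noteq> joined V ends F e"
  using assms joined_singleton_if_mem[OF assms(1,3,4)]
  by (auto simp: paracel_def joined_def doubleton_eq_iff)

lemma comp_Un_avoiding:
  assumes "graph V E ends" "\<gamma> \<union> \<alpha> \<subseteq> E"
    and avoid: "\<forall>g\<in>\<alpha>. fst (ends g) \<notin> comp V ends \<gamma> d \<and> snd (ends g) \<notin> comp V ends \<gamma> d"
  shows "comp V ends (\<gamma> \<union> \<alpha>) d = comp V ends \<gamma> d"
proof -
  have "(d, w) \<in> (adj ends \<gamma>)\<^sup>*" if "(d, w) \<in> (adj ends (\<gamma> \<union> \<alpha>))\<^sup>*" for w
    using that
  proof (induction rule: rtrancl_induct)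
    case base
    show ?case by simp
  next
    case (step v w)
    then obtain g where g: "g \<in> \<gamma> \<union> \<alpha>" "ends g = (v, w) \<or> ends g = (w, v)"
      by (auto simp: adj_def)
    have "v \<in> V"
      using g assms(2) graph_ends_mem[OF assms(1), of g] by auto
    then have "v \<in> comp V ends \<gamma> d"
      using step.IH by (simp add: comp_def)
    then have "g \<in> \<gamma>"
      using g avoid by force
    then have "(v, w) \<in> adj ends \<gamma>"
      using g(2) by (auto simp: adj_def)
    with step.IH show ?case by simp
  qed
  then show ?thesis
    using rtrancl_adj_mono[of \<gamma> "\<gamma> \<union> \<alpha>" ends] by (auto simp: comp_def)
qed

lemma comp_ne_Un_avoiding:
  assumes "graph V E ends" "\<gamma> \<union> \<alpha> \<subseteq> E" "y \<in> V"
    and "comp V ends \<gamma> x \<noteq> comp V ends \<gamma> y"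
    and "\<forall>g\<in>\<alpha>. fst (ends g) \<notin> comp V ends \<gamma> x \<and> snd (ends g) \<notin> comp V ends \<gamma> x"
  shows "comp V ends (\<gamma> \<union> \<alpha>) x \<noteq> comp V ends (\<gamma> \<union> \<alpha>) y"
proof
  assume "comp V ends (\<gamma> \<union> \<alpha>) x = comp V ends (\<gamma> \<union> \<alpha>) y"
  then have "y \<in> comp V ends (\<gamma> \<union> \<alpha>) x"
    using self_in_comp[OF assms(3)] by simp
  then have "y \<in> comp V ends \<gamma> x"
    by (simp add: comp_Un_avoiding[OF assms(1,2,5)])
  then have "comp V ends \<gamma> y = comp V ends \<gamma> x"
    by (rule comp_eq_if_mem)
  with assms(4) show False by simp
qed

lemma paracel_Un_avoiding:
  assumes G: "graph V E ends" and "e \<in> E" "f \<in> E"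
    and P: "paracel V E ends e f \<gamma>" and "\<alpha> \<subseteq> Eef E e f"
    and C: "C = comp V ends \<gamma> (fst (ends e)) \<or> C = comp V ends \<gamma> (snd (ends e))"
    and avoid: "\<forall>g\<in>\<alpha>. fst (ends g) \<notin> C \<and> snd (ends g) \<notin> C"
  shows "paracel V E ends e f (\<gamma> \<union> \<alpha>)"
proof -
  have sub: "\<gamma> \<union> \<alpha> \<subseteq> Eef E e f"
    using P assms(5) unfolding paracel_def by blast
  then have subE: "\<gamma> \<union> \<alpha> \<subseteq> E"
    unfolding Eef_def by blast
  have V: "fst (ends e) \<in> V" "snd (ends e) \<in> V"
    using graph_ends_mem[OF G assms(2)] by auto
  have ne: "comp V ends \<gamma> (fst (ends e)) \<noteq> comp V ends \<gamma> (snd (ends e))"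
    using P unfolding paracel_def by blast
  from C have "comp V ends (\<gamma> \<union> \<alpha>) (fst (ends e)) \<noteq> comp V ends (\<gamma> \<union> \<alpha>) (snd (ends e))"
  proof
    assume "C = comp V ends \<gamma> (fst (ends e))"
    then show ?thesis
      using comp_ne_Un_avoiding[OF G subE V(2) ne] avoid by blast
  next
    assume "C = comp V ends \<gamma> (snd (ends e))"
    then show ?thesis
      using comp_ne_Un_avoiding[OF G subE V(1) ne[symmetric]] avoid by blast
  qed
  moreover have "joined V ends \<gamma> f = joined V ends \<gamma> e"
    using P by (simp add: paracel_def)
  then have "joined V ends (\<gamma> \<union> \<alpha>) f = joined V ends (\<gamma> \<union> \<alpha>) e"
    by (rule joined_eq_mono[OF G assms(3,2) Un_upper1])
  ultimately show ?thesis
    using sub unfolding paracel_def by blast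
qed

definition smoots :: "'v set \<Rightarrow> 'e set \<Rightarrow> ('e \<Rightarrow> 'v \<times> 'v) \<Rightarrow> 'e \<Rightarrow> 'e \<Rightarrow> 'e set \<Rightarrow> 'e set" where
  "smoots V E ends e f F = {g. smoot V E ends e f F g}"

lemma smoots_subset: "smoots V E ends e f F \<subseteq> Eef E e f - F"
  by (auto simp: smoots_def smoot_def)

lemma smoot_mono:
  assumes "graph V E ends" "e \<in> E" "smoot V E ends e f \<gamma> g"
    and "\<gamma> \<subseteq> F" "F \<subseteq> Eef E e f" "g \<notin> F"
  shows "smoot V E ends e f F g"
proof -
  have "g \<in> E"
    using assms(3) by (simp add: smoot_def Eef_def)
  moreover have "joined V ends \<gamma> g = joined V ends \<gamma> e"
    using assms(3) by (simp add: smoot_def)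
  ultimately have "joined V ends F g = joined V ends F e"
    by (rule joined_eq_mono[OF assms(1) _ assms(2,4)])
  then show ?thesis
    using assms(3,6) by (simp add: smoot_def)
qed

lemma smoot_notin_compatible:
  assumes "graph V E ends" "e \<in> E" "compatible V E ends e f \<beta> \<gamma> \<alpha>"
    and "smoot V E ends e f \<gamma> g"
  shows "g \<notin> \<alpha>"
proof
  assume "g \<in> \<alpha>"
  have "g \<in> E"
    using assms(4) by (simp add: smoot_def Eef_def)
  have "paracel V E ends e f (\<gamma> \<union> \<alpha>)"
    using assms(3) by (simp add: compatible_def)
  moreover have "joined V ends \<gamma> g = joined V ends \<gamma> e"
    using assms(4) by (simp add: smoot_def)
  then have "joined V ends (\<gamma> \<union> \<alpha>) g = joined V ends (\<gamma> \<union> \<alpha>) e"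
    by (rule joined_eq_mono[OF assms(1) \<open>g \<in> E\<close> assms(2) Un_upper1])
  ultimately show False
    using joined_ne_if_mem_paracel[OF assms(1) _ _ \<open>g \<in> E\<close>] \<open>g \<in> \<alpha>\<close> by blast
qed

lemma compatible_with_smoots:
  assumes "graph V E ends" "e \<in> E" "paracel V E ends e f (\<gamma> \<union> \<alpha>)"
    and "\<alpha> \<subseteq> Eef E e f - \<gamma> - smoots V E ends e f \<gamma>"
  shows "compatible V E ends e f (smoots V E ends e f \<gamma>) \<gamma> \<alpha>"
proof -
  have sub: "\<gamma> \<union> \<alpha> \<subseteq> Eef E e f"
    using assms(3) by (simp add: paracel_def)
  have "smoot V E ends e f (\<gamma> \<union> \<alpha>) g" if "g \<in> smoots V E ends e f \<gamma>" for g
  proof (rule smoot_mono[OF assms(1,2) _ Un_upper1 sub])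
    show "smoot V E ends e f \<gamma> g"
      using that by (simp add: smoots_def)
    show "g \<notin> \<gamma> \<union> \<alpha>"
      using that assms(4) smoots_subset[of V E ends e f \<gamma>] by blast
  qed
  then show ?thesis
    using assms(3,4) by (auto simp: compatible_def)
qed

lemma xmon_add_eq_xmon_iff:
  assumes "finite A" "finite B" "finite S"
  shows "xmon A + xmon B = xmon S \<longleftrightarrow> A \<inter> B = {} \<and> A \<union> B = S"
proof
  assume sum: "xmon A + xmon B = xmon S"
  have "x \<notin> B" if "x \<in> A" for x
  proof -
    have "count (xmon A + xmon B) x \<le> 1"
      by (simp only: sum) (simp add: xmon_def count_mset_set')
    with that assms show ?thesis
      by (auto simp: xmon_def)
  qed
  moreover have "set_mset (xmon A + xmon B) = set_mset (xmon S)"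
    by (simp only: sum)
  ultimately show "A \<inter> B = {} \<and> A \<union> B = S"
    using assms by (auto simp: xmon_def)
next
  assume "A \<inter> B = {} \<and> A \<union> B = S"
  then show "xmon A + xmon B = xmon S"
    using assms by (auto simp: xmon_def mset_set_Union)
qed

lemma finite_Eef: "graph V E ends \<Longrightarrow> finite (Eef E e f)"
  by (simp add: graph_def Eef_def)

lemma complement_of_smoots_in_Bset:
  assumes G: "graph V E ends" and "e \<in> E" "f \<in> E" and P: "paracel V E ends e f \<gamma>"
  defines "\<beta> \<equiv> smoots V E ends e f \<gamma>"
  shows "xmon (Eef E e f - \<gamma> - \<beta>) \<in> Bset V E ends e f \<beta> \<gamma>"
proof -
  define C1 where "C1 = comp V ends \<gamma> (fst (ends e))"
  define C2 where "C2 = comp V ends \<gamma> (snd (ends e))"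
  define R where "R = Eef E e f - \<gamma> - \<beta>"
  define \<alpha>2 where "\<alpha>2 = {g \<in> R. fst (ends g) \<in> C2 \<or> snd (ends g) \<in> C2}"
  define \<alpha>1 where "\<alpha>1 = R - \<alpha>2"
  have "C1 \<noteq> C2"
    using P by (simp add: paracel_def C1_def C2_def)
  moreover have "comp V ends \<gamma> v = C1" if "v \<in> C1" for v
    using that unfolding C1_def by (rule comp_eq_if_mem)
  moreover have "comp V ends \<gamma> v = C2" if "v \<in> C2" for v
    using that unfolding C2_def by (rule comp_eq_if_mem)
  ultimately have joins: "joined V ends \<gamma> g = {C1, C2}"
    if "fst (ends g) \<in> C1 \<or> snd (ends g) \<in> C1" "fst (ends g) \<in> C2 \<or> snd (ends g) \<in> C2" for g
    using that by (auto simp: joined_def)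
  have avoid1: "\<forall>g\<in>\<alpha>1. fst (ends g) \<notin> C2 \<and> snd (ends g) \<notin> C2"
    by (auto simp: \<alpha>1_def \<alpha>2_def)
  have avoid2: "\<forall>g\<in>\<alpha>2. fst (ends g) \<notin> C1 \<and> snd (ends g) \<notin> C1"
  proof
    fix g assume g: "g \<in> \<alpha>2"
    show "fst (ends g) \<notin> C1 \<and> snd (ends g) \<notin> C1"
    proof (rule ccontr)
      assume "\<not> ?thesis"
      then have "joined V ends \<gamma> g = joined V ends \<gamma> e"
        using joins[of g] g by (auto simp: \<alpha>2_def joined_def C1_def C2_def)
      then have "smoot V E ends e f \<gamma> g"
        using g by (simp add: smoot_def \<alpha>2_def R_def)
      with g show False
        by (simp add: \<alpha>2_def R_def \<beta>_def smoots_def)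
    qed
  qed
  have sub: "\<alpha>1 \<subseteq> Eef E e f" "\<alpha>2 \<subseteq> Eef E e f"
    by (auto simp: \<alpha>1_def \<alpha>2_def R_def)
  have "paracel V E ends e f (\<gamma> \<union> \<alpha>1)"
    using paracel_Un_avoiding[OF G assms(2,3) P sub(1) _ avoid1] by (simp add: C2_def)
  moreover have "paracel V E ends e f (\<gamma> \<union> \<alpha>2)"
    using paracel_Un_avoiding[OF G assms(2,3) P sub(2) _ avoid2] by (simp add: C1_def)
  moreover have compat: "\<alpha> \<in> Aset V E ends e f \<beta> \<gamma>"
    if "paracel V E ends e f (\<gamma> \<union> \<alpha>)" "\<alpha> \<subseteq> R" for \<alpha>
    using compatible_with_smoots[OF G assms(2) that(1)] that(2)
    by (simp add: Aset_def \<beta>_def R_def)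
  moreover have "\<alpha>1 \<subseteq> R" "\<alpha>2 \<subseteq> R" "\<alpha>1 \<inter> \<alpha>2 = {}"
    by (auto simp: \<alpha>1_def \<alpha>2_def)
  ultimately have "twins V E ends e f \<beta> \<gamma> \<alpha>1 \<alpha>2"
    using compat[of "{}"] P by (simp add: twins_def)
  moreover have "xmon \<alpha>1 + xmon \<alpha>2 = xmon R"
    using finite_Eef[OF G] by (subst xmon_add_eq_xmon_iff)
      (auto simp: \<alpha>1_def \<alpha>2_def R_def intro: finite_subset)
  ultimately show ?thesis
    unfolding Bset_def R_def by force
qed

lemma Bset_decomposition_eq_smoots:
  assumes G: "graph V E ends" and "e \<in> E"
    and "\<beta> \<subseteq> Eef E e f" "\<beta> \<inter> \<gamma> = {}" "m \<in> Bset V E ends e f \<beta> \<gamma>"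
    and sum: "xmon \<beta> + xmon \<gamma> + m = xmon (Eef E e f)"
  shows "\<beta> = smoots V E ends e f \<gamma>"
proof -
  obtain \<alpha> \<alpha>' where m: "m = xmon \<alpha> + xmon \<alpha>'" and "twins V E ends e f \<beta> \<gamma> \<alpha> \<alpha>'"
    using assms(5) by (auto simp: Bset_def)
  then have compat: "compatible V E ends e f \<beta> \<gamma> \<alpha>" "compatible V E ends e f \<beta> \<gamma> \<alpha>'"
    "compatible V E ends e f \<beta> \<gamma> (\<alpha> \<inter> \<alpha>')"
    by (simp_all add: twins_def Aset_def)
  have fin: "finite (Eef E e f)" "finite \<beta>" "finite \<alpha>" "finite \<alpha>'"
    using finite_Eef[OF G] assms(3) compat(1,2)
    by (auto simp: compatible_def intro: finite_subset)
  have \<gamma>: "\<gamma> \<subseteq> Eef E e f" "finite \<gamma>"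
    using compat(1) fin(1) by (auto simp: compatible_def paracel_def intro: finite_subset)
  have "xmon \<beta> + xmon \<gamma> = xmon (\<beta> \<union> \<gamma>)"
    using fin \<gamma> assms(4) by (simp add: xmon_add_eq_xmon_iff)
  moreover have "xmon (\<beta> \<union> \<gamma>) + xmon \<alpha> = xmon (\<beta> \<union> \<gamma> \<union> \<alpha>)"
    using fin \<gamma> compat(1) by (auto simp: xmon_add_eq_xmon_iff compatible_def)
  ultimately have "xmon (\<beta> \<union> \<gamma> \<union> \<alpha>) + xmon \<alpha>' = xmon (Eef E e f)"
    using sum m by (metis add.assoc)
  then have partition: "(\<beta> \<union> \<gamma> \<union> \<alpha>) \<inter> \<alpha>' = {}" "\<beta> \<union> \<gamma> \<union> \<alpha> \<union> \<alpha>' = Eef E e f"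
    using fin \<gamma> by (simp_all add: xmon_add_eq_xmon_iff)
  have "\<alpha> \<inter> \<alpha>' = {}"
    using partition(1) by blast
  then have "\<beta> \<subseteq> smoots V E ends e f \<gamma>"
    using compat(3) by (auto simp: compatible_def smoots_def)
  moreover have "smoots V E ends e f \<gamma> \<subseteq> \<beta>"
  proof
    fix g assume "g \<in> smoots V E ends e f \<gamma>"
    then have "g \<in> Eef E e f - \<gamma>" "g \<notin> \<alpha>" "g \<notin> \<alpha>'"
      using smoots_subset[of V E ends e f \<gamma>] smoot_notin_compatible[OF G assms(2) compat(1)]
        smoot_notin_compatible[OF G assms(2) compat(2)]
      by (auto simp: smoots_def)
    then show "g \<in> \<beta>"
      using partition(2) by blast
  qed
  ultimately show ?thesis by blast
qed

theorem proposition4p4: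
  fixes V :: "'v set" and E :: "'e set" and ends :: "'e \<Rightarrow> 'v \<times> 'v"
    and e f :: 'e and \<gamma> :: "'e set"
  assumes "graph V E ends" and "e \<in> E" and "f \<in> E" and "e \<noteq> f"
    and "paracel V E ends e f \<gamma>"
  shows "\<exists>!p. (case p of (\<beta>, m) \<Rightarrow>
            \<beta> \<subseteq> Eef E e f \<and> \<beta> \<inter> \<gamma> = {} \<and> m \<in> Bset V E ends e f \<beta> \<gamma> \<and>
            xmon \<beta> + xmon \<gamma> + m = xmon (Eef E e f))"
proof
  define \<beta> where "\<beta> = smoots V E ends e f \<gamma>"
  define m where "m = xmon (Eef E e f - \<gamma> - \<beta>)"
  have sub: "\<gamma> \<subseteq> Eef E e f" "\<beta> \<subseteq> Eef E e f - \<gamma>"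
    using assms(5) smoots_subset[of V E ends e f \<gamma>] by (simp_all add: paracel_def \<beta>_def)
  have fin: "finite (Eef E e f)" "finite \<beta>" "finite \<gamma>"
    using finite_Eef[OF assms(1)] finite_subset[OF sub(1)] finite_subset[OF sub(2)] by auto
  have "xmon \<beta> + xmon \<gamma> = xmon (\<beta> \<union> \<gamma>)"
    using fin sub by (subst xmon_add_eq_xmon_iff) auto
  moreover have "xmon (\<beta> \<union> \<gamma>) + m = xmon (Eef E e f)"
    unfolding m_def using fin sub by (subst xmon_add_eq_xmon_iff) auto
  ultimately have sum: "xmon \<beta> + xmon \<gamma> + m = xmon (Eef E e f)"
    by simp
  show "case (\<beta>, m) of (\<beta>, m) \<Rightarrow> \<beta> \<subseteq> Eef E e f \<and> \<beta> \<inter> \<gamma> = {} \<and>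
      m \<in> Bset V E ends e f \<beta> \<gamma> \<and> xmon \<beta> + xmon \<gamma> + m = xmon (Eef E e f)"
    using complement_of_smoots_in_Bset[OF assms(1,2,3,5)] sub sum
    unfolding \<beta>_def m_def by auto
  fix p assume "case p of (\<beta>', m') \<Rightarrow> \<beta>' \<subseteq> Eef E e f \<and> \<beta>' \<inter> \<gamma> = {} \<and>
      m' \<in> Bset V E ends e f \<beta>' \<gamma> \<and> xmon \<beta>' + xmon \<gamma> + m' = xmon (Eef E e f)"
  then obtain \<beta>' m' where p: "p = (\<beta>', m')" "\<beta>' \<subseteq> Eef E e f" "\<beta>' \<inter> \<gamma> = {}"
      "m' \<in> Bset V E ends e f \<beta>' \<gamma>" and sum': "xmon \<beta>' + xmon \<gamma> + m' = xmon (Eef E e f)"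
    by (cases p) auto
  have "\<beta>' = \<beta>"
    unfolding \<beta>_def by (rule Bset_decomposition_eq_smoots[OF assms(1,2) p(2-4) sum'])
  with sum sum' have "xmon \<beta> + xmon \<gamma> + m' = xmon \<beta> + xmon \<gamma> + m"
    by simp
  then have "m' = m"
    by simp
  with p(1) \<open>\<beta>' = \<beta>\<close> show "p = (\<beta>, m)"
    by simp
qed

end
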